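(* Let $S,T$ be sets of vectors in $\mathbb{R}^d$ with $|S|=|T|=r$, $|S\triangle T|\leq 2d$, and $V_SV_S^\top$ invertible, and let $X=T\setminus S$, $Y=S\setminus T$. Then \[\det(V_TV_T^\top)\geq\det(V_SV_S^\top)\cdot\det\big(V_X^\top(V_SV_S^\top)^{-1}V_Y\big)^2.\]
   Context: For a set $Z$ of vectors in $\mathbb{R}^d$, $V_Z$ denotes the $d\times|Z|$ matrix whose columns are the vectors of $Z$. *)

theory Defs
  imports "Jordan_Normal_Form.Determinant"
begin

definition enum_set :: "'a set \<Rightarrow> 'a list" where
  "enum_set A = (SOME xs. distinct xs \<and> set xs = A)"

definition vmat :: "nat \<Rightarrow> real vec set \<Rightarrow> real mat" where
  "vmat d Z = mat_of_cols d (enum_set Z)"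

text \<open>Inverse of a square matrix (meaningful when it is invertible).\<close>
definition mat_inv :: "real mat \<Rightarrow> real mat" where
  "mat_inv A = (SOME B. B \<in> carrier_mat (dim_row A) (dim_row A) \<and>
                        A * B = 1\<^sub>m (dim_row A) \<and> B * A = 1\<^sub>m (dim_row A))"

end

(*
  Let G be the Gram matrix of S \<inter> T, U = V_X, Y = V_Y (both d x k) and A = V_S V_S^T = G + Y Y^T,
  so that V_T V_T^T = G + U U^T = A + U U^T - Y Y^T is a rank-2k update of A.  The matrix
  determinant lemma (via Sylvester's identity det (1 + X Y) = det (1 + Y X)) gives
  det (V_T V_T^T) = det A * det M with M = [[1 + P, Q], [-Q^T, H]], where P = U^T A^-1 U,
  Q = U^T A^-1 Y and H = 1 - Y^T A^-1 Y.  Both P and H are positive semidefinite, H because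
  Y^T (G + Y Y^T)^-1 Y is dominated by the identity.  The Schur complement of 1 + P gives
  det M = det (1 + P) * det (H + Q^T (1 + P)^-1 Q), and monotonicity of the determinant on
  positive semidefinite matrices, det N <= det (M + N), bounds this from below by
  det (1 + P) * det (Q^T (1 + P)^-1 Q) = (det Q)^2.  Monotonicity itself is proved by induction
  on the dimension, after a symmetric elimination step that clears the first row and column.
*)
theory Submission
  imports Defs
begin

section \<open>Block matrices and determinant identities\<close>

lemma append_rows_dim [simp]:
  "dim_row (A @\<^sub>r B) = dim_row A + dim_row B" "dim_col (A @\<^sub>r B) = dim_col A"
  unfolding append_rows_def by simp_all

lemma index_append_rows:
  assumes "A \<in> carrier_mat n1 k" "B \<in> carrier_mat n2 k" "i < n1 + n2" "j < k"
  shows "(A @\<^sub>r B) $$ (i,j) = (if i < n1 then A $$ (i,j) else B $$ (i - n1, j))"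
  using assms by (simp add: append_rows_def)

lemma row_append_rows:
  assumes "A \<in> carrier_mat n1 k" "B \<in> carrier_mat n2 k" "i < n1 + n2"
  shows "row (A @\<^sub>r B) i = (if i < n1 then row A i else row B (i - n1))"
  using assms by (intro eq_vecI) (auto simp: append_rows_def)

lemma col_append_rows:
  assumes "A \<in> carrier_mat n1 k" "B \<in> carrier_mat n2 k" "j < k"
  shows "col (A @\<^sub>r B) j = col A j @\<^sub>v col B j"
  using assms by (intro eq_vecI) (auto simp: append_rows_def)

lemma append_rows_mult:
  assumes A: "A \<in> carrier_mat n1 k" and B: "B \<in> carrier_mat n2 k" and C: "C \<in> carrier_mat k m"
  shows "(A @\<^sub>r B) * C = (A * C) @\<^sub>r (B * C)"
  using A B C
  by (intro eq_matI) (auto simp: row_append_rows[OF A B] index_append_rows[of "A * C" n1 m "B * C" n2])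

lemma append_rows_mult_transpose:
  assumes A: "A \<in> carrier_mat n1 k" and B: "B \<in> carrier_mat n2 k"
    and C: "C \<in> carrier_mat p1 k" and D: "D \<in> carrier_mat p2 k"
  shows "(A @\<^sub>r B) * (C @\<^sub>r D)\<^sup>T = four_block_mat (A * C\<^sup>T) (A * D\<^sup>T) (B * C\<^sup>T) (B * D\<^sup>T)"
  using A B C D
  by (intro eq_matI) (auto simp: row_append_rows[OF A B] row_append_rows[OF C D])

lemma transpose_append_rows_mult:
  assumes A: "A \<in> carrier_mat p1 n" and B: "B \<in> carrier_mat p2 n"
    and C: "C \<in> carrier_mat p1 m" and D: "D \<in> carrier_mat p2 m"
  shows "(A @\<^sub>r B)\<^sup>T * (C @\<^sub>r D) = A\<^sup>T * C + B\<^sup>T * D"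
  using A B C D
  by (intro eq_matI)
     (auto simp: col_append_rows[OF A B] col_append_rows[OF C D] scalar_prod_append[of _ p1 _ p2])

lemma det_one_add_mult_commute:
  fixes X Y :: "'a :: idom mat"
  assumes X: "X \<in> carrier_mat n m" and Y: "Y \<in> carrier_mat m n"
  shows "det (1\<^sub>m n + X * Y) = det (1\<^sub>m m + Y * X)"
proof -
  have XY: "X * Y \<in> carrier_mat n n" and YX: "Y * X \<in> carrier_mat m m" using X Y by auto
  \<comment> \<open>both sides are det ?K, factoring ?K as lower times upper block triangular in two ways\<close>
  let ?K = "four_block_mat (1\<^sub>m n) (-X) Y (1\<^sub>m m)"
  let ?L = "four_block_mat (1\<^sub>m n) (0\<^sub>m n m) Y (1\<^sub>m m)"
  have L: "?L \<in> carrier_mat (n + m) (n + m)" by simp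
  have det_L: "det ?L = 1"
    using det_four_block_mat_upper_right_zero[of "1\<^sub>m n" n "0\<^sub>m n m" m Y "1\<^sub>m m"] Y by simp
  have "four_block_mat (1\<^sub>m n + X * Y) (-X) (0\<^sub>m m n) (1\<^sub>m m) * ?L = ?K"
    using X Y XY by (subst mult_four_block_mat[of _ n n _ m _ m]) (auto intro!: cong_four_block_mat eq_matI)
  moreover have "det (four_block_mat (1\<^sub>m n + X * Y) (-X) (0\<^sub>m m n) (1\<^sub>m m)) = det (1\<^sub>m n + X * Y)"
    using det_four_block_mat_lower_left_zero[of "1\<^sub>m n + X * Y" n "-X" m "0\<^sub>m m n" "1\<^sub>m m"] X XY by simp
  ultimately have "det ?K = det (1\<^sub>m n + X * Y)"
    using det_mult[OF _ L, of "four_block_mat (1\<^sub>m n + X * Y) (-X) (0\<^sub>m m n) (1\<^sub>m m)"] det_L X XY by simp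
  moreover have "?L * four_block_mat (1\<^sub>m n) (-X) (0\<^sub>m m n) (1\<^sub>m m + Y * X) = ?K"
    using X Y YX by (subst mult_four_block_mat[of _ n n _ m _ m]) (auto intro!: cong_four_block_mat eq_matI)
  moreover have "det (four_block_mat (1\<^sub>m n) (-X) (0\<^sub>m m n) (1\<^sub>m m + Y * X)) = det (1\<^sub>m m + Y * X)"
    using det_four_block_mat_lower_left_zero[of "1\<^sub>m n" n "-X" m "0\<^sub>m m n" "1\<^sub>m m + Y * X"] X YX by simp
  ultimately show ?thesis
    using det_mult[OF L, of "four_block_mat (1\<^sub>m n) (-X) (0\<^sub>m m n) (1\<^sub>m m + Y * X)"] det_L X YX by simp
qed

lemma det_four_block_mat_schur:
  fixes A :: "'a :: field mat"
  assumes A: "A \<in> carrier_mat n n" and B: "B \<in> carrier_mat n m"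
    and C: "C \<in> carrier_mat m n" and D: "D \<in> carrier_mat m m"
    and Ai: "Ai \<in> carrier_mat n n" and inv: "A * Ai = 1\<^sub>m n"
  shows "det (four_block_mat A B C D) = det A * det (D - C * Ai * B)"
proof -
  let ?S = "D - C * Ai * B"
  let ?L = "four_block_mat A (0\<^sub>m n m) C (1\<^sub>m m)"
  let ?R = "four_block_mat (1\<^sub>m n) (Ai * B) (0\<^sub>m m n) ?S"
  have S: "?S \<in> carrier_mat m m" using C Ai B D by auto
  have AiB: "Ai * B \<in> carrier_mat n m" using Ai B by auto
  have "A * (Ai * B) = (A * Ai) * B" by (rule assoc_mult_mat[symmetric, OF A Ai B])
  then have AAiB: "A * (Ai * B) = B" using inv B by simp
  have "C * (Ai * B) = C * Ai * B" by (rule assoc_mult_mat[symmetric, OF C Ai B])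
  then have CAiB: "C * (Ai * B) + ?S = D" using C Ai B D by (auto intro!: eq_matI)
  have "?L * ?R = four_block_mat (A * 1\<^sub>m n + 0\<^sub>m n m * 0\<^sub>m m n) (A * (Ai * B) + 0\<^sub>m n m * ?S)
      (C * 1\<^sub>m n + 1\<^sub>m m * 0\<^sub>m m n) (C * (Ai * B) + 1\<^sub>m m * ?S)"
    by (rule mult_four_block_mat[OF A zero_carrier_mat C one_carrier_mat one_carrier_mat AiB zero_carrier_mat S])
  also have "\<dots> = four_block_mat A B C D"
    using A B C S AAiB CAiB by (intro cong_four_block_mat) simp_all
  finally have LR: "?L * ?R = four_block_mat A B C D" .
  have "det ?L = det A"
    using det_four_block_mat_upper_right_zero[OF A _ C one_carrier_mat] by simp
  moreover have "det ?R = det ?S"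
    using det_four_block_mat_lower_left_zero[OF one_carrier_mat AiB _ S] by simp
  moreover have "det (?L * ?R) = det ?L * det ?R"
    by (rule det_mult[of _ "n + m"]) (use A C S AiB in auto)
  ultimately show ?thesis unfolding LR by simp
qed

lemma det_add_mult:
  fixes A :: "'a :: field mat"
  assumes A: "A \<in> carrier_mat n n" and Ai: "Ai \<in> carrier_mat n n" and inv: "A * Ai = 1\<^sub>m n"
    and U: "U \<in> carrier_mat n m" and V: "V \<in> carrier_mat m n"
  shows "det (A + U * V) = det A * det (1\<^sub>m m + V * Ai * U)"
proof -
  have AiU: "Ai * U \<in> carrier_mat n m" and AiUV: "Ai * U * V \<in> carrier_mat n n"
    using Ai U V by auto
  have "A * (Ai * U * V) = (A * Ai) * (U * V)"
    using A Ai U V by (simp add: assoc_mult_mat[of _ n n _ n _ n] assoc_mult_mat[of _ n n _ m _ n])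
  then have "A * (1\<^sub>m n + Ai * U * V) = A + U * V"
    using A U V AiUV inv by (simp add: mult_add_distrib_mat[OF A one_carrier_mat AiUV])
  then have "det (A + U * V) = det A * det (1\<^sub>m n + Ai * U * V)"
    using det_mult[OF A add_carrier_mat[OF AiUV, of "1\<^sub>m n"]] by simp
  also have "det (1\<^sub>m n + Ai * U * V) = det (1\<^sub>m m + V * (Ai * U))"
    by (rule det_one_add_mult_commute[OF AiU V])
  also have "V * (Ai * U) = V * Ai * U"
    by (rule assoc_mult_mat[symmetric, OF V Ai U])
  finally show ?thesis .
qed

lemma det_nonzero_right_inverse:
  fixes D :: "'a :: field mat"
  assumes D: "D \<in> carrier_mat n n" and d: "det D \<noteq> 0"
  obtains Di where "Di \<in> carrier_mat n n" and "D * Di = 1\<^sub>m n"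
proof
  show "(1 / det D) \<cdot>\<^sub>m adj_mat D \<in> carrier_mat n n" using adj_mat(1)[OF D] by simp
  have "D * ((1 / det D) \<cdot>\<^sub>m adj_mat D) = (1 / det D) \<cdot>\<^sub>m (det D \<cdot>\<^sub>m 1\<^sub>m n)"
    using mult_smult_distrib[OF D adj_mat(1)[OF D]] adj_mat(2)[OF D] by simp
  also have "\<dots> = 1\<^sub>m n" using d by (intro eq_matI) auto
  finally show "D * ((1 / det D) \<cdot>\<^sub>m adj_mat D) = 1\<^sub>m n" .
qed

lemma inverse_of_sym_mat_sym:
  fixes A :: "'a :: comm_ring_1 mat"
  assumes A: "A \<in> carrier_mat n n" and sym: "A\<^sup>T = A" and B: "B \<in> carrier_mat n n"
    and inv: "A * B = 1\<^sub>m n"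
  shows "B\<^sup>T = B"
proof -
  have BtA: "B\<^sup>T * A = 1\<^sub>m n" using transpose_mult[OF A B] sym inv by simp
  have "B\<^sup>T = B\<^sup>T * (A * B)" using inv B by simp
  also have "\<dots> = (B\<^sup>T * A) * B" using A B by (simp add: assoc_mult_mat[of _ n n _ n _ n])
  finally show ?thesis using BtA B by simp
qed

lemma det_empty_mat: "M \<in> carrier_mat 0 0 \<Longrightarrow> det M = 1"
  by (metis det_one one_carrier_mat carrier_matD eq_matI less_nat_zero_code)

lemma det_row0_off_diag_zero:
  fixes A :: "'a :: comm_ring_1 mat"
  assumes A: "A \<in> carrier_mat (Suc m) (Suc m)"
    and z: "\<And>j. 0 < j \<Longrightarrow> j < Suc m \<Longrightarrow> A $$ (0,j) = 0"
  shows "det A = A $$ (0,0) * det (mat_delete A 0 0)"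
proof -
  have "det A = (\<Sum>j<Suc m. A $$ (0,j) * cofactor A 0 j)"
    by (rule laplace_expansion_row[OF A]) simp
  also have "\<dots> = A $$ (0,0) * cofactor A 0 0"
    unfolding sum.lessThan_Suc_shift using z by simp
  finally show ?thesis by (simp add: cofactor_def)
qed

lemma det_update_00:
  fixes A B :: "'a :: comm_ring_1 mat"
  assumes A: "A \<in> carrier_mat (Suc m) (Suc m)" and B: "B \<in> carrier_mat (Suc m) (Suc m)"
    and eq: "\<And>i j. i < Suc m \<Longrightarrow> j < Suc m \<Longrightarrow> (i,j) \<noteq> (0,0) \<Longrightarrow> A $$ (i,j) = B $$ (i,j)"
  shows "det A = det B + (A $$ (0,0) - B $$ (0,0)) * det (mat_delete A 0 0)"
proof -
  have "mat_delete B 0 j = mat_delete A 0 j" for j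
    using A B eq by (intro eq_matI) (auto simp: mat_delete_def)
  then have cof: "cofactor B 0 j = cofactor A 0 j" for j
    by (simp add: cofactor_def)
  have "det A = (\<Sum>j<Suc m. A $$ (0,j) * cofactor A 0 j)"
    by (rule laplace_expansion_row[OF A]) simp
  moreover have "det B = (\<Sum>j<Suc m. B $$ (0,j) * cofactor A 0 j)"
    unfolding cof[symmetric] by (rule laplace_expansion_row[OF B]) simp
  ultimately have "det A - det B = (\<Sum>j<Suc m. (A $$ (0,j) - B $$ (0,j)) * cofactor A 0 j)"
    by (simp only: left_diff_distrib sum_subtractf)
  also have "\<dots> = (A $$ (0,0) - B $$ (0,0)) * det (mat_delete A 0 0)"
    unfolding sum.lessThan_Suc_shift using eq by (simp add: cofactor_def)
  finally show ?thesis by (simp add: algebra_simps)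
qed

lemma mat_delete_add:
  "A \<in> carrier_mat n m \<Longrightarrow> B \<in> carrier_mat n m \<Longrightarrow>
    mat_delete (A + B) i j = mat_delete A i j + mat_delete B i j"
  by (intro eq_matI) (auto simp: mat_delete_def)

section \<open>Positive semidefinite matrices\<close>

definition psd_mat :: "nat \<Rightarrow> real mat \<Rightarrow> bool" where
  "psd_mat n M \<longleftrightarrow>
     M \<in> carrier_mat n n \<and> M\<^sup>T = M \<and> (\<forall>x \<in> carrier_vec n. 0 \<le> x \<bullet> (M *\<^sub>v x))"

lemma psd_matI:
  assumes "M \<in> carrier_mat n n" "M\<^sup>T = M" "\<And>x. x \<in> carrier_vec n \<Longrightarrow> 0 \<le> x \<bullet> (M *\<^sub>v x)"
  shows "psd_mat n M"
  using assms unfolding psd_mat_def by blast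

lemma psd_mat_carrier: "psd_mat n M \<Longrightarrow> M \<in> carrier_mat n n"
  unfolding psd_mat_def by blast

lemma psd_mat_transpose: "psd_mat n M \<Longrightarrow> M\<^sup>T = M"
  unfolding psd_mat_def by blast

lemma psd_mat_form_nonneg: "psd_mat n M \<Longrightarrow> x \<in> carrier_vec n \<Longrightarrow> 0 \<le> x \<bullet> (M *\<^sub>v x)"
  unfolding psd_mat_def by blast

lemma psd_mat_sym: "psd_mat n M \<Longrightarrow> i < n \<Longrightarrow> j < n \<Longrightarrow> M $$ (i,j) = M $$ (j,i)"
  unfolding psd_mat_def by (metis carrier_matD index_transpose_mat(1))

lemma psd_mat_diag_nonneg:
  assumes M: "psd_mat n M" and i: "i < n"
  shows "0 \<le> M $$ (i,i)"
proof -
  have "0 \<le> unit_vec n i \<bullet> (M *\<^sub>v unit_vec n i)" by (rule psd_mat_form_nonneg[OF M], simp)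
  also have "\<dots> = M $$ (i,i)" using psd_mat_carrier[OF M] i by simp
  finally show ?thesis .
qed

lemma quadratic_form_sum:
  fixes M :: "'a :: comm_semiring_0 mat"
  assumes "M \<in> carrier_mat n n" and "x \<in> carrier_vec n"
  shows "x \<bullet> (M *\<^sub>v x) = (\<Sum>i<n. \<Sum>j<n. x $ i * M $$ (i,j) * x $ j)"
  using assms unfolding scalar_prod_def mult_mat_vec_def row_def
  by (auto simp: sum_distrib_left mult.assoc atLeast0LessThan intro!: sum.cong)

lemma scalar_prod_self_nonneg: "0 \<le> (v :: real vec) \<bullet> v"
  unfolding scalar_prod_def by (auto intro!: sum_nonneg)

lemma psd_mat_congruence:
  assumes M: "psd_mat n M" and P: "P \<in> carrier_mat m n"
  shows "psd_mat m (P * M * P\<^sup>T)"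
proof (rule psd_matI)
  have Mc: "M \<in> carrier_mat n n" by (rule psd_mat_carrier[OF M])
  show "P * M * P\<^sup>T \<in> carrier_mat m m" using P Mc by auto
  show "(P * M * P\<^sup>T)\<^sup>T = P * M * P\<^sup>T"
    using P Mc psd_mat_transpose[OF M]
    by (simp add: transpose_mult[of _ m n _ m] transpose_mult[of _ n n _ m] assoc_mult_mat[of _ m n _ n _ m])
  fix x :: "real vec" assume x: "x \<in> carrier_vec m"
  have "(P * M * P\<^sup>T) *\<^sub>v x = P *\<^sub>v (M *\<^sub>v (P\<^sup>T *\<^sub>v x))"
    using P Mc x by (simp add: assoc_mult_mat_vec[of _ m n _ n x] assoc_mult_mat_vec[of _ m n _ m x])
  moreover have "x \<bullet> (P *\<^sub>v (M *\<^sub>v (P\<^sup>T *\<^sub>v x))) = (P\<^sup>T *\<^sub>v x) \<bullet> (M *\<^sub>v (P\<^sup>T *\<^sub>v x))"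
    using transpose_vec_mult_scalar[OF P _ x] P Mc x by simp
  ultimately show "0 \<le> x \<bullet> ((P * M * P\<^sup>T) *\<^sub>v x)"
    using psd_mat_form_nonneg[OF M, of "P\<^sup>T *\<^sub>v x"] P x by simp
qed

lemma psd_mat_one: "psd_mat n (1\<^sub>m n)"
  by (rule psd_matI, auto simp: scalar_prod_self_nonneg)

lemma psd_mat_gram: "V \<in> carrier_mat n m \<Longrightarrow> psd_mat n (V * V\<^sup>T)"
  using psd_mat_congruence[OF psd_mat_one] by simp

lemma psd_mat_add: "psd_mat n M \<Longrightarrow> psd_mat n N \<Longrightarrow> psd_mat n (M + N)"
  unfolding psd_mat_def
  by (auto simp: transpose_add add_mult_distrib_mat_vec[of _ n n] scalar_prod_add_distrib[of _ n])

lemma psd_mat_inverse: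
  assumes A: "psd_mat n A" and B: "B \<in> carrier_mat n n" and inv: "A * B = 1\<^sub>m n"
  shows "psd_mat n B"
proof -
  have Ac: "A \<in> carrier_mat n n" by (rule psd_mat_carrier[OF A])
  have "B\<^sup>T = B" by (rule inverse_of_sym_mat_sym[OF Ac psd_mat_transpose[OF A] B inv])
  moreover have "B * A = 1\<^sub>m n" by (rule mat_mult_left_right_inverse[OF Ac B inv])
  ultimately have "B * A * B\<^sup>T = B" using B by simp
  then show ?thesis using psd_mat_congruence[OF A B] by simp
qed

lemma psd_mat_delete:
  assumes M: "psd_mat (Suc m) M"
  shows "psd_mat m (mat_delete M 0 0)"
proof (rule psd_matI)
  have Mc: "M \<in> carrier_mat (Suc m) (Suc m)" by (rule psd_mat_carrier[OF M])
  have entry: "mat_delete M 0 0 $$ (i,j) = M $$ (Suc i, Suc j)" if "i < m" "j < m" for i j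
    using Mc that unfolding mat_delete_def by auto
  show c: "mat_delete M 0 0 \<in> carrier_mat m m" using mat_delete_carrier[OF Mc] by simp
  show "(mat_delete M 0 0)\<^sup>T = mat_delete M 0 0"
    by (rule eq_matI, use c Mc psd_mat_sym[OF M] in \<open>auto simp: entry\<close>)
  fix y :: "real vec" assume y: "y \<in> carrier_vec m"
  let ?x = "vCons 0 y"
  have x: "?x \<in> carrier_vec (Suc m)" using y by simp
  have "?x \<bullet> (M *\<^sub>v ?x) = (\<Sum>i<m. \<Sum>j<m. y $ i * M $$ (Suc i, Suc j) * y $ j)"
    unfolding quadratic_form_sum[OF Mc x] sum.lessThan_Suc_shift using y by simp
  also have "\<dots> = y \<bullet> (mat_delete M 0 0 *\<^sub>v y)"
    unfolding quadratic_form_sum[OF c y] by (auto simp: entry intro!: sum.cong)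
  finally show "0 \<le> y \<bullet> (mat_delete M 0 0 *\<^sub>v y)"
    using psd_mat_form_nonneg[OF M x] by simp
qed

definition clear_row0_col0 :: "'a :: zero mat \<Rightarrow> 'a mat" where
  "clear_row0_col0 M = mat (dim_row M) (dim_col M) (\<lambda>(i,j). if i = 0 \<or> j = 0 then 0 else M $$ (i,j))"

lemma psd_mat_clear_row0_col0:
  assumes M: "psd_mat (Suc m) M"
  shows "psd_mat (Suc m) (clear_row0_col0 M)"
proof (rule psd_matI)
  have Mc: "M \<in> carrier_mat (Suc m) (Suc m)" by (rule psd_mat_carrier[OF M])
  show C: "clear_row0_col0 M \<in> carrier_mat (Suc m) (Suc m)"
    using Mc unfolding clear_row0_col0_def by auto
  show "(clear_row0_col0 M)\<^sup>T = clear_row0_col0 M"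
    using Mc psd_mat_sym[OF M] by (intro eq_matI) (auto simp: clear_row0_col0_def)
  fix x :: "real vec" assume x: "x \<in> carrier_vec (Suc m)"
  define y where "y = vec (Suc m) (\<lambda>i. if i = 0 then 0 else x $ i)"
  have y: "y \<in> carrier_vec (Suc m)" unfolding y_def by simp
  have "x \<bullet> (clear_row0_col0 M *\<^sub>v x) = y \<bullet> (M *\<^sub>v y)"
    unfolding quadratic_form_sum[OF C x] quadratic_form_sum[OF Mc y] sum.lessThan_Suc_shift
    using Mc by (simp add: clear_row0_col0_def y_def)
  then show "0 \<le> x \<bullet> (clear_row0_col0 M *\<^sub>v x)"
    using psd_mat_form_nonneg[OF M y] by simp
qed

lemma psd_mat_row0_zero:
  assumes M: "psd_mat n M" and z: "M $$ (0,0) = 0" and j: "j < n"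
  shows "M $$ (0,j) = 0"
proof (rule ccontr)
  assume ne: "M $$ (0,j) \<noteq> 0"
  then have j0: "j \<noteq> 0" using z by metis
  have Mc: "M \<in> carrier_mat n n" by (rule psd_mat_carrier[OF M])
  \<comment> \<open>chosen so that the form at t e_0 + e_j, which is 2 t M_0j + M_jj, equals -1\<close>
  define t where "t = - (M $$ (j,j) + 1) / (2 * M $$ (0,j))"
  define x where "x = vec n (\<lambda>i. if i = 0 then t else if i = j then 1 else (0::real))"
  have x: "x \<in> carrier_vec n" unfolding x_def by simp
  have lin: "(\<Sum>i<n. x $ i * g i) = t * g 0 + g j" for g :: "nat \<Rightarrow> real"
  proof -
    have "(\<Sum>i<n. x $ i * g i) = (\<Sum>i\<in>{0, j}. x $ i * g i)"
      using j by (intro sum.mono_neutral_right) (auto simp: x_def)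
    then show ?thesis using j j0 by (simp add: x_def)
  qed
  have "x \<bullet> (M *\<^sub>v x) = (\<Sum>i<n. x $ i * (\<Sum>k<n. M $$ (i,k) * x $ k))"
    unfolding quadratic_form_sum[OF Mc x] by (simp add: sum_distrib_left mult.assoc)
  also have "\<dots> = t * (t * M $$ (0,0) + M $$ (0,j)) + (t * M $$ (j,0) + M $$ (j,j))"
    using lin[of "\<lambda>k. M $$ (0,k)"] lin[of "\<lambda>k. M $$ (j,k)"] by (simp add: lin mult.commute)
  also have "\<dots> = 2 * t * M $$ (0,j) + M $$ (j,j)"
    using z psd_mat_sym[OF M, of 0 j] j by (simp add: algebra_simps)
  also have "\<dots> = -1" using ne by (simp add: t_def field_simps)
  finally show False using psd_mat_form_nonneg[OF M x] by simp
qed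

section \<open>Determinants of positive semidefinite matrices\<close>

definition elim_col0_mat :: "nat \<Rightarrow> real mat \<Rightarrow> real mat" where
  "elim_col0_mat n N = mat n n (\<lambda>(i,j).
     if i = j then 1 else if j = 0 then - N $$ (i,0) / N $$ (0,0) else 0)"

lemma elim_col0_mat_dim [simp]:
  "dim_row (elim_col0_mat n N) = n" "dim_col (elim_col0_mat n N) = n"
  unfolding elim_col0_mat_def by simp_all

lemma elim_col0_mat_carrier [simp]: "elim_col0_mat n N \<in> carrier_mat n n"
  by (simp add: carrier_matI)

lemma det_elim_col0_mat: "det (elim_col0_mat n N) = 1"
proof -
  have "det (elim_col0_mat n N) = prod_list (diag_mat (elim_col0_mat n N))"
    by (rule det_lower_triangular[of n]) (auto simp: elim_col0_mat_def)
  also have "\<dots> = 1"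
    unfolding prod_list_diag_prod by (auto simp: elim_col0_mat_def intro!: prod.neutral)
  finally show ?thesis .
qed

lemma det_elim_col0_congruence:
  assumes X: "X \<in> carrier_mat n n"
  shows "det (elim_col0_mat n N * X * (elim_col0_mat n N)\<^sup>T) = det X"
proof -
  let ?L = "elim_col0_mat n N"
  have "det (?L * X * ?L\<^sup>T) = det (?L * X) * det (?L\<^sup>T)"
    using X by (intro det_mult[of _ n] mult_carrier_mat) auto
  also have "\<dots> = det X"
    using X det_mult[of ?L n X] det_transpose[of ?L n] by (simp add: det_elim_col0_mat)
  finally show ?thesis .
qed

lemma elim_col0_congruence_col0:
  assumes N: "N \<in> carrier_mat n n" and c: "N $$ (0,0) \<noteq> 0" and i: "i < n"
  shows "(elim_col0_mat n N * N * (elim_col0_mat n N)\<^sup>T) $$ (i,0) = (if i = 0 then N $$ (0,0) else 0)"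
proof -
  let ?L = "elim_col0_mat n N"
  have n: "0 < n" using i by simp
  have "col (?L\<^sup>T) 0 = unit_vec n 0"
    using n by (intro eq_vecI) (auto simp: elim_col0_mat_def)
  moreover have "(?L * N * ?L\<^sup>T) $$ (i,0) = row (?L * N) i \<bullet> col (?L\<^sup>T) 0"
    using N i n by (simp del: col_transpose)
  ultimately have "(?L * N * ?L\<^sup>T) $$ (i,0) = (?L * N) $$ (i,0)"
    using N i n by simp
  also have "\<dots> = (\<Sum>l<n. ?L $$ (i,l) * N $$ (l,0))"
    using N i n by (simp add: scalar_prod_def atLeast0LessThan)
  also have "\<dots> = (\<Sum>l\<in>{0, i}. ?L $$ (i,l) * N $$ (l,0))"
    using i by (intro sum.mono_neutral_right) (auto simp: elim_col0_mat_def)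
  also have "\<dots> = (if i = 0 then N $$ (0,0) else 0)"
    using c i by (simp add: elim_col0_mat_def)
  finally show ?thesis .
qed

lemma psd_mat_elim_col0:
  assumes N: "psd_mat (Suc m) N"
  defines "D \<equiv> elim_col0_mat (Suc m) N * N * (elim_col0_mat (Suc m) N)\<^sup>T"
  shows "psd_mat (Suc m) D" and "det D = det N" and "D $$ (0,0) = N $$ (0,0)"
    and "\<And>j. 0 < j \<Longrightarrow> j < Suc m \<Longrightarrow> D $$ (0,j) = 0 \<and> D $$ (j,0) = 0"
proof -
  have Nc: "N \<in> carrier_mat (Suc m) (Suc m)" by (rule psd_mat_carrier[OF N])
  show D: "psd_mat (Suc m) D"
    unfolding D_def by (rule psd_mat_congruence[OF N elim_col0_mat_carrier])
  show "det D = det N" unfolding D_def by (rule det_elim_col0_congruence[OF Nc])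
  have "D $$ (0,0) = N $$ (0,0) \<and> (\<forall>j. 0 < j \<and> j < Suc m \<longrightarrow> D $$ (0,j) = 0 \<and> D $$ (j,0) = 0)"
  proof (cases "N $$ (0,0) = 0")
    case True
    \<comment> \<open>the pivot vanishes, so division by zero makes the elimination matrix the identity\<close>
    then have "elim_col0_mat (Suc m) N = 1\<^sub>m (Suc m)"
      by (intro eq_matI) (auto simp: elim_col0_mat_def)
    then have "D = N" unfolding D_def using Nc by simp
    then show ?thesis
      using psd_mat_row0_zero[OF N True] psd_mat_sym[OF N] True by auto
  next
    case False
    then show ?thesis
      using elim_col0_congruence_col0[OF Nc False] psd_mat_sym[OF D] unfolding D_def by auto
  qed
  then show "D $$ (0,0) = N $$ (0,0)" and "\<And>j. 0 < j \<Longrightarrow> j < Suc m \<Longrightarrow> D $$ (0,j) = 0 \<and> D $$ (j,0) = 0"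
    by auto
qed

lemma psd_mat_det_nonneg: "psd_mat n M \<Longrightarrow> 0 \<le> det M"
proof (induction n arbitrary: M)
  case 0
  then show ?case using det_empty_mat psd_mat_carrier by simp
next
  case (Suc m)
  define D where "D = elim_col0_mat (Suc m) M * M * (elim_col0_mat (Suc m) M)\<^sup>T"
  note D = psd_mat_elim_col0[OF Suc.prems, folded D_def]
  have "det M = D $$ (0,0) * det (mat_delete D 0 0)"
    using D det_row0_off_diag_zero[OF psd_mat_carrier[OF D(1)]] by simp
  moreover have "0 \<le> D $$ (0,0)" by (rule psd_mat_diag_nonneg[OF D(1)]) simp
  moreover have "0 \<le> det (mat_delete D 0 0)" by (rule Suc.IH[OF psd_mat_delete[OF D(1)]])
  ultimately show ?case by simp
qed

lemma psd_mat_det_mono: "psd_mat n M \<Longrightarrow> psd_mat n N \<Longrightarrow> det N \<le> det (M + N)"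
proof (induction n arbitrary: M N)
  case 0
  then show ?case using det_empty_mat psd_mat_carrier by (metis add_carrier_mat order.refl)
next
  case (Suc m)
  let ?L = "elim_col0_mat (Suc m) N"
  define D where "D = ?L * N * ?L\<^sup>T"
  define M' where "M' = ?L * M * ?L\<^sup>T"
  note D = psd_mat_elim_col0[OF Suc.prems(2), folded D_def]
  have M': "psd_mat (Suc m) M'" unfolding M'_def by (rule psd_mat_congruence[OF Suc.prems(1)]) simp
  have Mc: "M \<in> carrier_mat (Suc m) (Suc m)" and Nc: "N \<in> carrier_mat (Suc m) (Suc m)"
    using Suc.prems by (simp_all add: psd_mat_carrier)
  have Dc: "D \<in> carrier_mat (Suc m) (Suc m)" and M'c: "M' \<in> carrier_mat (Suc m) (Suc m)"
    using D(1) M' by (simp_all add: psd_mat_carrier)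
  have LM: "?L * M \<in> carrier_mat (Suc m) (Suc m)" and LN: "?L * N \<in> carrier_mat (Suc m) (Suc m)"
    using Mc Nc by auto
  have "?L * (M + N) * ?L\<^sup>T = M' + D"
    unfolding M'_def D_def mult_add_distrib_mat[OF elim_col0_mat_carrier Mc Nc]
    by (rule add_mult_distrib_mat[OF LM LN, of _ "Suc m"]) simp
  then have det_MN: "det (M + N) = det (M' + D)"
    using det_elim_col0_congruence[of "M + N" "Suc m" N] Mc Nc by simp
  \<comment> \<open>the determinant is affine in the (0,0) entry, and removing that entry leaves a psd matrix\<close>
  have "det (M' + D) = det (M' + clear_row0_col0 D)
      + ((M' + D) $$ (0,0) - (M' + clear_row0_col0 D) $$ (0,0)) * det (mat_delete (M' + D) 0 0)"
    by (rule det_update_00) (use M'c Dc D(4) in \<open>auto simp: clear_row0_col0_def\<close>)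
  also have "(M' + D) $$ (0,0) - (M' + clear_row0_col0 D) $$ (0,0) = D $$ (0,0)"
    using M'c Dc by (simp add: clear_row0_col0_def)
  finally have expand: "det (M' + D) = det (M' + clear_row0_col0 D) + D $$ (0,0) * det (mat_delete (M' + D) 0 0)" .
  have "0 \<le> det (M' + clear_row0_col0 D)"
    by (rule psd_mat_det_nonneg[OF psd_mat_add[OF M' psd_mat_clear_row0_col0[OF D(1)]]])
  moreover have "det (mat_delete D 0 0) \<le> det (mat_delete (M' + D) 0 0)"
    unfolding mat_delete_add[OF M'c Dc]
    by (rule Suc.IH[OF psd_mat_delete[OF M'] psd_mat_delete[OF D(1)]])
  then have "D $$ (0,0) * det (mat_delete D 0 0) \<le> D $$ (0,0) * det (mat_delete (M' + D) 0 0)"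
    by (rule mult_left_mono) (rule psd_mat_diag_nonneg[OF D(1)], simp)
  moreover have "det N = D $$ (0,0) * det (mat_delete D 0 0)"
    using D det_row0_off_diag_zero[OF Dc] by simp
  ultimately show ?case unfolding det_MN expand by linarith
qed

section \<open>Exchanging the columns of a Gram matrix\<close>

lemma det_four_block_psd_ge:
  assumes P: "psd_mat k P" and H: "psd_mat k H" and Q: "Q \<in> carrier_mat k k"
  shows "(det Q)\<^sup>2 \<le> det (four_block_mat (1\<^sub>m k + P) Q (-(Q\<^sup>T)) H)"
proof -
  let ?D = "1\<^sub>m k + P"
  have D: "psd_mat k ?D" by (rule psd_mat_add[OF psd_mat_one P])
  have Dc: "?D \<in> carrier_mat k k" and Hc: "H \<in> carrier_mat k k"
    using D H by (simp_all add: psd_mat_carrier)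
  have "det (1\<^sub>m k) \<le> det (P + 1\<^sub>m k)" by (rule psd_mat_det_mono[OF P psd_mat_one])
  moreover have "P + 1\<^sub>m k = ?D" by (rule comm_add_mat[OF psd_mat_carrier[OF P] one_carrier_mat])
  ultimately have det_D: "1 \<le> det ?D" by simp
  obtain Di where Di: "Di \<in> carrier_mat k k" and inv: "?D * Di = 1\<^sub>m k"
    by (rule det_nonzero_right_inverse[OF Dc]) (use det_D in simp)
  let ?S = "Q\<^sup>T * Di * Q"
  have S: "psd_mat k ?S"
    using psd_mat_congruence[OF psd_mat_inverse[OF D Di inv], of "Q\<^sup>T"] Q by simp
  have det_Di: "det ?D * det Di = 1" using det_mult[OF Dc Di] inv by simp
  have det_S: "det ?S = (det Q)\<^sup>2 * det Di"
  proof -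
    have QtDi: "Q\<^sup>T * Di \<in> carrier_mat k k" using Q Di by auto
    have "det ?S = det (Q\<^sup>T) * det Di * det Q"
      using det_mult[OF QtDi Q] det_mult[of "Q\<^sup>T" k Di] Q Di by simp
    then show ?thesis using det_transpose[OF Q] by (simp add: power2_eq_square)
  qed
  have "(-(Q\<^sup>T)) * Di * Q = - ?S"
    using Q Di by simp
  then have "H - (-(Q\<^sup>T)) * Di * Q = H + ?S"
    using Q Di Hc by (auto intro!: eq_matI)
  then have "det (four_block_mat ?D Q (-(Q\<^sup>T)) H) = det ?D * det (H + ?S)"
    using det_four_block_mat_schur[OF Dc Q _ Hc Di inv] Q by simp
  also have "\<dots> \<ge> det ?D * det ?S"
    using psd_mat_det_mono[OF H S] det_D by (simp add: mult_left_mono)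
  also have "det ?D * det ?S = (det Q)\<^sup>2 * (det ?D * det Di)"
    unfolding det_S by (simp only: ac_simps)
  finally show ?thesis unfolding det_Di by simp
qed

lemma psd_mat_one_minus_inverse_form:
  fixes G Y Ai :: "real mat"
  assumes G: "psd_mat d G" and Y: "Y \<in> carrier_mat d k" and Ai: "Ai \<in> carrier_mat d d"
    and inv: "(G + Y * Y\<^sup>T) * Ai = 1\<^sub>m d"
  shows "psd_mat k (1\<^sub>m k - Y\<^sup>T * Ai * Y)"
proof (rule psd_matI)
  let ?A = "G + Y * Y\<^sup>T" and ?R = "Y\<^sup>T * Ai * Y"
  have A: "psd_mat d ?A" by (rule psd_mat_add[OF G psd_mat_gram[OF Y]])
  have Gc: "G \<in> carrier_mat d d" and Ac: "?A \<in> carrier_mat d d"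
    using G A by (simp_all add: psd_mat_carrier)
  have YT: "Y\<^sup>T \<in> carrier_mat k d" using Y by simp
  have R_psd: "psd_mat k ?R"
    using psd_mat_congruence[OF psd_mat_inverse[OF A Ai inv] YT] by simp
  then have R: "?R \<in> carrier_mat k k" by (rule psd_mat_carrier)
  show "1\<^sub>m k - ?R \<in> carrier_mat k k" using R by (simp add: minus_carrier_mat)
  show "(1\<^sub>m k - ?R)\<^sup>T = 1\<^sub>m k - ?R"
    using transpose_minus[of "1\<^sub>m k" k k ?R] R psd_mat_transpose[OF R_psd] by simp
  fix x :: "real vec" assume x: "x \<in> carrier_vec k"
  define z where "z = Ai *\<^sub>v (Y *\<^sub>v x)"
  define w where "w = Y\<^sup>T *\<^sub>v z"
  have z: "z \<in> carrier_vec d" and w: "w \<in> carrier_vec k"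
    unfolding z_def w_def using Y Ai x by auto
  have Rx: "?R *\<^sub>v x = w"
    unfolding w_def z_def using Y Ai x
    by (simp add: assoc_mult_mat_vec[of _ k d _ k x] assoc_mult_mat_vec[of _ k d _ d])
  have Az: "?A *\<^sub>v z = Y *\<^sub>v x"
    unfolding z_def using Ac Ai Y x inv by (simp flip: assoc_mult_mat_vec[of _ d d _ d])
  \<comment> \<open>computing z \<bullet> (A z) in two ways gives w \<bullet> w \<le> w \<bullet> x\<close>
  have "z \<bullet> (?A *\<^sub>v z) = z \<bullet> (G *\<^sub>v z) + w \<bullet> w"
    unfolding w_def using Gc Y z transpose_vec_mult_scalar[OF Y _ z, of "Y\<^sup>T *\<^sub>v z"]
    by (simp add: add_mult_distrib_mat_vec[of _ d d] scalar_prod_add_distrib[of _ d]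
        assoc_mult_mat_vec[of _ d k _ d])
  moreover have "z \<bullet> (Y *\<^sub>v x) = w \<bullet> x"
    unfolding w_def by (rule transpose_vec_mult_scalar[OF Y x z, symmetric])
  ultimately have ww: "w \<bullet> w \<le> w \<bullet> x"
    using psd_mat_form_nonneg[OF G z] Az by simp
  have "(x - w) \<bullet> (x - w) = x \<bullet> x - 2 * (w \<bullet> x) + w \<bullet> w"
    using x w comm_scalar_prod[OF x w]
    by (simp add: minus_scalar_prod_distrib[of _ k] scalar_prod_minus_distrib[of _ k])
  then have "w \<bullet> x \<le> x \<bullet> x"
    using scalar_prod_self_nonneg[of "x - w"] ww by simp
  moreover have "x \<bullet> ((1\<^sub>m k - ?R) *\<^sub>v x) = x \<bullet> x - x \<bullet> w"
    using x R Rx w by (simp add: minus_mult_distrib_mat_vec[of _ k k] scalar_prod_minus_distrib[of _ k])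
  ultimately show "0 \<le> x \<bullet> ((1\<^sub>m k - ?R) *\<^sub>v x)"
    using comm_scalar_prod[OF x w] by simp
qed

lemma det_exchange_gram_columns:
  fixes G Ai U Y :: "'a :: field mat"
  assumes G: "G \<in> carrier_mat d d" and Ai: "Ai \<in> carrier_mat d d"
    and inv: "(G + Y * Y\<^sup>T) * Ai = 1\<^sub>m d"
    and U: "U \<in> carrier_mat d k" and Y: "Y \<in> carrier_mat d k"
  shows "det (G + U * U\<^sup>T) = det (G + Y * Y\<^sup>T) *
    det (four_block_mat (1\<^sub>m k + U\<^sup>T * Ai * U) (U\<^sup>T * Ai * Y) (-(Y\<^sup>T * Ai * U)) (1\<^sub>m k - Y\<^sup>T * Ai * Y))"
proof -
  have UT: "U\<^sup>T \<in> carrier_mat k d" and YT: "Y\<^sup>T \<in> carrier_mat k d" and nYT: "-(Y\<^sup>T) \<in> carrier_mat k d"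
    using U Y by auto
  \<comment> \<open>G + U U^T is the rank-2k update R^T V of G + Y Y^T\<close>
  define R where "R = U\<^sup>T @\<^sub>r Y\<^sup>T"
  define V where "V = U\<^sup>T @\<^sub>r -(Y\<^sup>T)"
  have R: "R\<^sup>T \<in> carrier_mat d (k + k)" and V: "V \<in> carrier_mat (k + k) d"
    unfolding R_def V_def using UT YT nYT by auto
  have "R\<^sup>T * V = U * U\<^sup>T + Y * -(Y\<^sup>T)"
    unfolding R_def V_def using transpose_append_rows_mult[OF UT YT UT nYT] by simp
  then have "G + U * U\<^sup>T = (G + Y * Y\<^sup>T) + R\<^sup>T * V"
    using G U Y by (auto intro!: eq_matI)
  then have "det (G + U * U\<^sup>T) = det (G + Y * Y\<^sup>T) * det (1\<^sub>m (k + k) + V * Ai * R\<^sup>T)"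
    using det_add_mult[OF _ Ai inv R V] G Y by auto
  moreover have "V * Ai * R\<^sup>T = four_block_mat (U\<^sup>T * Ai * U) (U\<^sup>T * Ai * Y) (-(Y\<^sup>T * Ai * U)) (-(Y\<^sup>T * Ai * Y))"
  proof -
    have "V * Ai = (U\<^sup>T * Ai) @\<^sub>r (-(Y\<^sup>T) * Ai)"
      unfolding V_def by (rule append_rows_mult[OF UT nYT Ai])
    moreover have "U\<^sup>T * Ai \<in> carrier_mat k d" "-(Y\<^sup>T) * Ai \<in> carrier_mat k d"
      using UT nYT Ai by auto
    ultimately show ?thesis
      unfolding R_def using append_rows_mult_transpose[of "U\<^sup>T * Ai" k d "-(Y\<^sup>T) * Ai" k "U\<^sup>T" k "Y\<^sup>T" k]
        UT YT Ai by simp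
  qed
  moreover have "1\<^sub>m (k + k) + four_block_mat (U\<^sup>T * Ai * U) (U\<^sup>T * Ai * Y) (-(Y\<^sup>T * Ai * U)) (-(Y\<^sup>T * Ai * Y))
      = four_block_mat (1\<^sub>m k + U\<^sup>T * Ai * U) (U\<^sup>T * Ai * Y) (-(Y\<^sup>T * Ai * U)) (1\<^sub>m k - Y\<^sup>T * Ai * Y)"
    using U Y Ai by (auto intro!: eq_matI)
  ultimately show ?thesis by simp
qed

lemma det_exchange_gram_ge:
  fixes G U Y Ai :: "real mat"
  assumes G: "psd_mat d G" and U: "U \<in> carrier_mat d k" and Y: "Y \<in> carrier_mat d k"
    and Ai: "Ai \<in> carrier_mat d d" and inv: "(G + Y * Y\<^sup>T) * Ai = 1\<^sub>m d"
  shows "det (G + Y * Y\<^sup>T) * (det (U\<^sup>T * Ai * Y))\<^sup>2 \<le> det (G + U * U\<^sup>T)"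
proof -
  have A: "psd_mat d (G + Y * Y\<^sup>T)" by (rule psd_mat_add[OF G psd_mat_gram[OF Y]])
  have Ai_psd: "psd_mat d Ai" by (rule psd_mat_inverse[OF A Ai inv])
  have UT: "U\<^sup>T \<in> carrier_mat k d" and YT: "Y\<^sup>T \<in> carrier_mat k d" using U Y by auto
  have P: "psd_mat k (U\<^sup>T * Ai * U)" using psd_mat_congruence[OF Ai_psd UT] by simp
  have H: "psd_mat k (1\<^sub>m k - Y\<^sup>T * Ai * Y)"
    by (rule psd_mat_one_minus_inverse_form[OF G Y Ai inv])
  have Q: "U\<^sup>T * Ai * Y \<in> carrier_mat k k" using UT Ai Y by auto
  have "(U\<^sup>T * Ai * Y)\<^sup>T = Y\<^sup>T * (U\<^sup>T * Ai)\<^sup>T"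
    using UT Ai Y by (intro transpose_mult) auto
  also have "(U\<^sup>T * Ai)\<^sup>T = Ai * U"
    using transpose_mult[OF UT Ai] psd_mat_transpose[OF Ai_psd] by simp
  also have "Y\<^sup>T * (Ai * U) = Y\<^sup>T * Ai * U" by (rule assoc_mult_mat[symmetric, OF YT Ai U])
  finally have "(U\<^sup>T * Ai * Y)\<^sup>T = Y\<^sup>T * Ai * U" .
  then have "(det (U\<^sup>T * Ai * Y))\<^sup>2 \<le> det (four_block_mat (1\<^sub>m k + U\<^sup>T * Ai * U) (U\<^sup>T * Ai * Y)
      (-(Y\<^sup>T * Ai * U)) (1\<^sub>m k - Y\<^sup>T * Ai * Y))"
    using det_four_block_psd_ge[OF P H Q] by simp
  then show ?thesis
    unfolding det_exchange_gram_columns[OF psd_mat_carrier[OF G] Ai inv U Y]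
    using psd_mat_det_nonneg[OF A] by (simp add: mult_left_mono)
qed

section \<open>Gram matrices of finite sets of vectors\<close>

lemma mat_inv_right_inverse:
  assumes inv: "invertible_mat A" and A: "A \<in> carrier_mat n n"
  shows "mat_inv A \<in> carrier_mat n n" and "A * mat_inv A = 1\<^sub>m n"
proof -
  obtain B where AB: "A * B = 1\<^sub>m n" and BA: "B * A = 1\<^sub>m (dim_row B)"
    using inv A unfolding invertible_mat_def inverts_mat_def by auto
  have "B \<in> carrier_mat n n"
    using arg_cong[OF AB, of dim_col] arg_cong[OF BA, of dim_col] A by auto
  then have "\<exists>B. B \<in> carrier_mat (dim_row A) (dim_row A) \<and>
      A * B = 1\<^sub>m (dim_row A) \<and> B * A = 1\<^sub>m (dim_row A)"
    using AB BA A by auto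
  from someI_ex[OF this] show "mat_inv A \<in> carrier_mat n n" and "A * mat_inv A = 1\<^sub>m n"
    using A unfolding mat_inv_def by auto
qed

lemma enum_set_correct: "finite Z \<Longrightarrow> distinct (enum_set Z) \<and> set (enum_set Z) = Z"
  unfolding enum_set_def by (rule someI_ex) (use finite_distinct_list in blast)

lemma vmat_carrier: "finite Z \<Longrightarrow> vmat d Z \<in> carrier_mat d (card Z)"
  unfolding vmat_def using enum_set_correct distinct_card by (metis mat_of_cols_carrier(1))

lemma vmat_gram_index:
  assumes Z: "finite Z" and i: "i < d" and j: "j < d"
  shows "(vmat d Z * (vmat d Z)\<^sup>T) $$ (i,j) = (\<Sum>z\<in>Z. z $ i * z $ j)"
proof -
  let ?zs = "enum_set Z"
  have len: "length ?zs = card Z" using enum_set_correct[OF Z] distinct_card by metis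
  have "(vmat d Z * (vmat d Z)\<^sup>T) $$ (i,j) = (\<Sum>l<length ?zs. ?zs ! l $ i * ?zs ! l $ j)"
    using vmat_carrier[OF Z] i j len
    by (auto simp: vmat_def mat_of_cols_index scalar_prod_def atLeast0LessThan intro!: sum.cong)
  also have "\<dots> = sum_list (map (\<lambda>z. z $ i * z $ j) ?zs)"
    by (simp add: sum_list_sum_nth atLeast0LessThan)
  also have "\<dots> = (\<Sum>z\<in>Z. z $ i * z $ j)"
    using sum_list_distinct_conv_sum_set enum_set_correct[OF Z] by metis
  finally show ?thesis .
qed

lemma vmat_gram_split:
  assumes Z: "finite Z"
  shows "vmat d Z * (vmat d Z)\<^sup>T =
    vmat d (Z \<inter> W) * (vmat d (Z \<inter> W))\<^sup>T + vmat d (Z - W) * (vmat d (Z - W))\<^sup>T"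
  using vmat_carrier[OF Z, of d] vmat_carrier[of "Z \<inter> W" d] vmat_carrier[of "Z - W" d] Z
  by (intro eq_matI) (auto simp del: index_mult_mat(1) simp: vmat_gram_index sum.Int_Diff[of Z _ W])

theorem mainTheorem7:
  fixes d r :: nat and S T :: "real vec set"
  assumes "S \<subseteq> carrier_vec d" and "T \<subseteq> carrier_vec d"
    and "finite S" and "finite T"
    and "card S = r" and "card T = r"
    and "card ((S - T) \<union> (T - S)) \<le> 2 * d"
    and "invertible_mat (vmat d S * (vmat d S)\<^sup>T)"
  shows "det (vmat d T * (vmat d T)\<^sup>T) \<ge>
           det (vmat d S * (vmat d S)\<^sup>T) *
           (det ((vmat d (T - S))\<^sup>T * mat_inv (vmat d S * (vmat d S)\<^sup>T) * vmat d (S - T)))\<^sup>2"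
proof -
  note fin = \<open>finite S\<close> \<open>finite T\<close>
  let ?gram = "\<lambda>Z. vmat d Z * (vmat d Z)\<^sup>T"
  define k where "k = card (T - S)"
  have "card (S - T) = k"
    unfolding k_def using fin \<open>card S = r\<close> \<open>card T = r\<close>
    by (simp add: card_Diff_subset_Int Int_commute)
  then have U: "vmat d (T - S) \<in> carrier_mat d k" and Y: "vmat d (S - T) \<in> carrier_mat d k"
    using fin vmat_carrier[of "T - S" d] vmat_carrier[of "S - T" d] unfolding k_def by auto
  have S: "?gram S = ?gram (S \<inter> T) + ?gram (S - T)"
    by (rule vmat_gram_split[OF \<open>finite S\<close>])
  have T: "?gram T = ?gram (S \<inter> T) + ?gram (T - S)"
    using vmat_gram_split[OF \<open>finite T\<close>, of d S] by (simp add: Int_commute)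
  have "?gram S \<in> carrier_mat d d" using vmat_carrier[OF \<open>finite S\<close>, of d] by auto
  note Ai = mat_inv_right_inverse[OF \<open>invertible_mat (?gram S)\<close> this]
  have G: "psd_mat d (?gram (S \<inter> T))"
    by (rule psd_mat_gram[OF vmat_carrier]) (use fin in simp)
  show ?thesis
    using det_exchange_gram_ge[OF G U Y Ai[unfolded S]] unfolding S T by simp
qed

end
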